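(* Let $\{\tau_k\}$ be the merit parameter sequence generated by Algorithm 1 or Algorithm 2 (described in the context) under the Standing Assumption and Matrix Assumption of the context, and suppose the algorithm does not terminate finitely. Then there exist $k_\tau\in\mathbb{N}$ and $\tau_{\min}>0$ such that $\tau_k=\tau_{\min}$ for all $k\ge k_\tau$.
   Context: Notation: $g_k=\nabla f(x_k)$, $c_k=c(x_k)$, $J_k=\nabla c(x_k)^T$; $\phi(x,\tau)=\tau f(x)+\|c(x)\|_1$; $\Delta q(x,\tau,g,H,d)=-\tau(g^Td+\frac12\max\{d^THd,0\})+\|c(x)\|_1$. Matrix Assumption: symmetric $H_k$ with $\|H_k\|_2\le\kappa_H$ and $u^TH_ku\ge\zeta\|u\|_2^2$ whenever $J_ku=0$. Common iteration: $(d_k,y_k)$ solves $H_kd_k+J_k^Ty_k=-g_k$, $J_kd_k=-c_k$; stop if $g_k+J_k^Ty_k=0$ and $c_k=0$. $\tau_k^{trial}=\infty$ if $g_k^Td_k+\max\{d_k^TH_kd_k,0\}\le0$, else $\frac{(1-\sigma)\|c_k\|_1}{g_k^Td_k+\max\{d_k^TH_kd_k,0\}}$; $\tau_k=\tau_{k-1}$ if $\tau_{k-1}\le\tau_k^{trial}$, else $(1-\epsilon)\tau_k^{trial}$ (with $\tau_{-1}>0$, $\epsilon,\sigma\in(0,1)$); $x_{k+1}=x_k+\alpha_kd_k$. (SD) for trial $\alpha$: $\phi(x_k+\alpha d_k,\tau_k)\le\phi(x_k,\tau_k)-\eta\alpha\Delta q(x_k,\tau_k,g_k,H_k,d_k)$,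 $\eta\in(0,1)$. Algorithm 1 (inputs also $\rho>1$, $L_{-1}>0$, $\gamma_{-1,i}>0$): choose $L_{k,0}\in(0,L_{k-1}]$, $\gamma_{k,i,0}\in(0,\gamma_{k-1,i}]$; for $j=0,1,\dots$ with $\Lambda_{k,j}=\tau_kL_{k,j}+\sum_i\gamma_{k,i,j}$: $\widehat\alpha_{k,j}=\frac{2(1-\eta)\Delta q(x_k,\tau_k,g_k,H_k,d_k)}{\Lambda_{k,j}\|d_k\|_2^2}$, $\widetilde\alpha_{k,j}=\widehat\alpha_{k,j}-\frac{4\|c_k\|_1}{\Lambda_{k,j}\|d_k\|_2^2}$; $\alpha_{k,j}=\widehat\alpha_{k,j}$ if $\widehat\alpha_{k,j}<1$, $1$ if $\widetilde\alpha_{k,j}\le1\le\widehat\alpha_{k,j}$, $\widetilde\alpha_{k,j}$ if $\widetilde\alpha_{k,j}>1$; accept ($\alpha_k=\alpha_{k,j}$, $L_k=L_{k,j}$, $\gamma_{k,i}=\gamma_{k,i,j}$) if (SD) holds or if both $f(x_k+\alpha_{k,j}d_k)\le f(x_k)+\alpha_{k,j}g_k^Td_k+\frac12L_{k,j}\alpha_{k,j}^2\|d_k\|_2^2$ (LF) and $|c_i(x_k+\alpha_{k,j}d_k)|\le|c_i(x_k)+\alpha_{k,j}\nabla c_i(x_k)^Td_k|+\frac12\gamma_{k,i,j}\alpha_{k,j}^2\|d_k\|_2^2$ (LC$_i$) for all $i$; otherwise multiply $L_{k,j}$ by $\rho$ if (LF) fails and $\gamma_{k,i,j}$ by $\rho$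 if (LC$_i$) fails. Algorithm 2 (inputs also $\nu\in(0,1)$, $\alpha>0$): $\alpha_k=\nu^j\alpha$ for the smallest $j\ge0$ such that (SD) holds. Standing Assumption: an open convex set $\mathcal X$ contains all iterates and trial points $x_k+\alpha_{k,j}d_k$; $f$ is $C^1$, bounded below on $\mathcal X$, $\nabla f$ bounded and $L$-Lipschitz on $\mathcal X$; $c$, $\nabla c^T$ bounded on $\mathcal X$; $\nabla c_i$ is $\gamma_i$-Lipschitz on $\mathcal X$; singular values of $\nabla c(x)^T$ bounded away from zero uniformly over $\mathcal X$. *)

theory Defs
  imports "HOL-Analysis.Analysis"
begin

text \<open>Variables live in real^'n, constraints are indexed by the finite type 'm.
  Jc x is the constraint Jacobian (row i = gradient of c_i transposed).\<close>

definition l1n :: "real^'m \<Rightarrow> real" where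
  "l1n v = (\<Sum>i\<in>UNIV. \<bar>v $ i\<bar>)"

definition merit :: "(real^'n \<Rightarrow> real) \<Rightarrow> (real^'n \<Rightarrow> real^'m) \<Rightarrow> real \<Rightarrow> real^'n \<Rightarrow> real" where
  "merit f c tau x = tau * f x + l1n (c x)"

definition dq :: "real \<Rightarrow> real^'n \<Rightarrow> real^'n^'n \<Rightarrow> real^'n \<Rightarrow> real^'m \<Rightarrow> real" where
  "dq tau g H d cx = - tau * (g \<bullet> d + 1/2 * max (d \<bullet> (H *v d)) 0) + l1n cx"

text \<open>Merit parameter update; the case tau_trial = infinity is the first branch.\<close>
definition tau_update :: "real \<Rightarrow> real \<Rightarrow> real \<Rightarrow> real^'n \<Rightarrow> real^'n^'n \<Rightarrow> real^'n \<Rightarrow> real \<Rightarrow> real" where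
  "tau_update eps sig tprev g H d cn =
     (let q = g \<bullet> d + max (d \<bullet> (H *v d)) 0 in
      if q \<le> 0 then tprev
      else (let tt = (1 - sig) * cn / q in if tprev \<le> tt then tprev else (1 - eps) * tt))"

definition SD :: "(real^'n \<Rightarrow> real) \<Rightarrow> (real^'n \<Rightarrow> real^'m) \<Rightarrow> real \<Rightarrow> real
     \<Rightarrow> real^'n \<Rightarrow> real^'n \<Rightarrow> real^'n \<Rightarrow> real^'n^'n \<Rightarrow> real \<Rightarrow> bool" where
  "SD f c eta tau x g d H a \<longleftrightarrow>
     merit f c tau (x + a *\<^sub>R d) \<le> merit f c tau x - eta * a * dq tau g H d (c x)"

text \<open>Common iteration (without the step size rule). tau0 is tau_{-1}.\<close>
definition common_iter ::
  "(real^'n \<Rightarrow> real) \<Rightarrow> (real^'n \<Rightarrow> real^'n) \<Rightarrow> (real^'n \<Rightarrow> real^'m) \<Rightarrow> (real^'n \<Rightarrow> real^'n^'m)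
   \<Rightarrow> (nat \<Rightarrow> real^'n^'n) \<Rightarrow> real \<Rightarrow> real \<Rightarrow> real
   \<Rightarrow> (nat \<Rightarrow> real^'n) \<Rightarrow> (nat \<Rightarrow> real^'n) \<Rightarrow> (nat \<Rightarrow> real^'m) \<Rightarrow> (nat \<Rightarrow> real) \<Rightarrow> (nat \<Rightarrow> real) \<Rightarrow> bool"
  where
  "common_iter f gradf c Jc H eps sig tau0 x d y tau alpha \<longleftrightarrow>
     (\<forall>k. H k *v d k + transpose (Jc (x k)) *v y k = - gradf (x k)
          \<and> Jc (x k) *v d k = - c (x k)
          \<and> tau k = tau_update eps sig (if k = 0 then tau0 else tau (k - 1))
                      (gradf (x k)) (H k) (d k) (l1n (c (x k)))
          \<and> x (Suc k) = x k + alpha k *\<^sub>R d k)"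

definition alg1_trial ::
  "real \<Rightarrow> real \<Rightarrow> real \<Rightarrow> ('m \<Rightarrow> real) \<Rightarrow> real^'n \<Rightarrow> real^'n^'n \<Rightarrow> real^'n \<Rightarrow> real^'m \<Rightarrow> real" where
  "alg1_trial eta tau Lkj gkj g H d cx =
     (let Lam = tau * Lkj + (\<Sum>i\<in>UNIV. gkj i);
          ah = 2 * (1 - eta) * dq tau g H d cx / (Lam * (norm d)\<^sup>2);
          atl = ah - 4 * l1n cx / (Lam * (norm d)\<^sup>2)
      in if ah < 1 then ah else if atl \<le> 1 then 1 else atl)"

definition LF :: "(real^'n \<Rightarrow> real) \<Rightarrow> real^'n \<Rightarrow> real^'n \<Rightarrow> real^'n \<Rightarrow> real \<Rightarrow> real \<Rightarrow> bool" where
  "LF f x g d Lkj a \<longleftrightarrow> f (x + a *\<^sub>R d) \<le> f x + a * (g \<bullet> d) + 1/2 * Lkj * a\<^sup>2 * (norm d)\<^sup>2"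

definition LC :: "(real^'n \<Rightarrow> real^'m) \<Rightarrow> real^'n \<Rightarrow> real^'n^'m \<Rightarrow> real^'n \<Rightarrow> 'm \<Rightarrow> real \<Rightarrow> real \<Rightarrow> bool" where
  "LC c x J d i gki a \<longleftrightarrow>
     \<bar>c (x + a *\<^sub>R d) $ i\<bar> \<le> \<bar>c x $ i + a * (J *v d) $ i\<bar> + 1/2 * gki * a\<^sup>2 * (norm d)\<^sup>2"

text \<open>LL k j = L_{k,j}, GG k j i = gamma_{k,i,j}, jacc k = accepted
  inner index; L_k = LL k (jacc k), gamma_{k,i} = GG k (jacc k) i. Lm1 = L_{-1}, Gm1 i = gamma_{-1,i}.\<close>
definition alg1_steps ::
  "(real^'n \<Rightarrow> real) \<Rightarrow> (real^'n \<Rightarrow> real^'n) \<Rightarrow> (real^'n \<Rightarrow> real^'m) \<Rightarrow> (real^'n \<Rightarrow> real^'n^'m)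
   \<Rightarrow> (nat \<Rightarrow> real^'n^'n) \<Rightarrow> real \<Rightarrow> real \<Rightarrow> real \<Rightarrow> ('m \<Rightarrow> real) \<Rightarrow> (real^'n) set
   \<Rightarrow> (nat \<Rightarrow> real^'n) \<Rightarrow> (nat \<Rightarrow> real^'n) \<Rightarrow> (nat \<Rightarrow> real) \<Rightarrow> (nat \<Rightarrow> real)
   \<Rightarrow> (nat \<Rightarrow> nat \<Rightarrow> real) \<Rightarrow> (nat \<Rightarrow> nat \<Rightarrow> 'm \<Rightarrow> real) \<Rightarrow> (nat \<Rightarrow> nat) \<Rightarrow> bool" where
  "alg1_steps f gradf c Jc H eta rho Lm1 Gm1 X x d tau alpha LL GG jacc \<longleftrightarrow>
     (\<forall>k. let g = gradf (x k); J = Jc (x k); cx = c (x k);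
              tr = (\<lambda>j. alg1_trial eta (tau k) (LL k j) (GG k j) g (H k) (d k) cx);
              acc = (\<lambda>j. SD f c eta (tau k) (x k) g (d k) (H k) (tr j)
                         \<or> (LF f (x k) g (d k) (LL k j) (tr j)
                            \<and> (\<forall>i. LC c (x k) J (d k) i (GG k j i) (tr j))))
          in 0 < LL k 0 \<and> LL k 0 \<le> (if k = 0 then Lm1 else LL (k - 1) (jacc (k - 1)))
           \<and> (\<forall>i. 0 < GG k 0 i \<and> GG k 0 i \<le> (if k = 0 then Gm1 i else GG (k - 1) (jacc (k - 1)) i))
           \<and> (\<forall>j < jacc k. \<not> acc j
                 \<and> LL k (Suc j) = (if LF f (x k) g (d k) (LL k j) (tr j) then LL k j else rho * LL k j)
                 \<and> (\<forall>i. GG k (Suc j) i = (if LC c (x k) J (d k) i (GG k j i) (tr j)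
                                          then GG k j i else rho * GG k j i)))
           \<and> acc (jacc k)
           \<and> alpha k = tr (jacc k)
           \<and> (\<forall>j \<le> jacc k. x k + tr j *\<^sub>R d k \<in> X))"

definition alg2_steps ::
  "(real^'n \<Rightarrow> real) \<Rightarrow> (real^'n \<Rightarrow> real^'n) \<Rightarrow> (real^'n \<Rightarrow> real^'m)
   \<Rightarrow> (nat \<Rightarrow> real^'n^'n) \<Rightarrow> real \<Rightarrow> real \<Rightarrow> real \<Rightarrow> (real^'n) set
   \<Rightarrow> (nat \<Rightarrow> real^'n) \<Rightarrow> (nat \<Rightarrow> real^'n) \<Rightarrow> (nat \<Rightarrow> real) \<Rightarrow> (nat \<Rightarrow> real) \<Rightarrow> bool" where
  "alg2_steps f gradf c H eta nu abar X x d tau alpha \<longleftrightarrow>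
     (\<forall>k. \<exists>j. alpha k = nu ^ j * abar
          \<and> SD f c eta (tau k) (x k) (gradf (x k)) (d k) (H k) (nu ^ j * abar)
          \<and> (\<forall>i < j. \<not> SD f c eta (tau k) (x k) (gradf (x k)) (d k) (H k) (nu ^ i * abar))
          \<and> (\<forall>i \<le> j. x k + (nu ^ i * abar) *\<^sub>R d k \<in> X))"

end

theory Submission
  imports Defs
begin

(*
  The denominator g_k.d_k + max (d_k.H_k d_k) 0 of the trial merit parameter is bounded by a
  uniform constant times the l1 norm of c_k. Split d_k = v + u with v in the range of J_k^T and
  u in the null space of J_k: the constraint equation J_k v = -c_k and the uniform singular value
  bound give |v| = O(|c_k|); curvature of H_k on the null space then bounds u, hence d_k and the
  multiplier y_k; and the identity d_k.H_k d_k = y_k.c_k - g_k.d_k turns the denominator into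
  y_k.c_k + max (-d_k.H_k d_k) 0, where the negative part of the curvature is O(|v|^2).
  So the trial value is bounded below by a positive constant and tau_k never drops below a
  positive level, while every change of tau_k shrinks it by the factor 1 - eps; hence it changes
  only finitely often. The step sizes never enter, so the argument covers both algorithms.
*)

lemma inner_transpose_mult:
  fixes J :: "real^'n^'m"
  shows "(transpose J *v w) \<bullet> u = w \<bullet> (J *v u)"
  by (metis dot_lmul_matrix transpose_transpose vector_transpose_matrix)

lemma l1n_nonneg: "0 \<le> l1n v"
  unfolding l1n_def by (simp add: sum_nonneg)

lemma range_transpose_null_decomp:
  fixes J :: "real^'n^'m"
  obtains w u where "d = transpose J *v w + u" "J *v u = 0"
proof -
  let ?S = "range (\<lambda>w. transpose J *v w)"
  have "subspace ?S"
    by (metis matrix_vector_mul_linear subspace_UNIV linear_subspace_image)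
  obtain v u where v: "v \<in> span ?S" and orth: "\<And>z. z \<in> span ?S \<Longrightarrow> orthogonal u z"
    and d: "d = v + u"
    by (metis orthogonal_subspace_decomp_exists)
  from v \<open>subspace ?S\<close> obtain w where w: "v = transpose J *v w"
    by (metis span_eq_iff imageE)
  have "transpose J *v (J *v u) \<in> span ?S"
    by (intro span_base) auto
  then have "u \<bullet> (transpose J *v (J *v u)) = 0"
    using orth by (simp add: orthogonal_def)
  then have "(J *v u) \<bullet> (J *v u) = 0"
    using inner_transpose_mult[of J "J *v u" u] by (simp only: inner_commute)
  then show ?thesis
    using that d w by simp
qed

lemma norm_range_transpose_le:
  fixes J :: "real^'n^'m"
  assumes s: "0 < s" and sing: "\<And>v. s * norm v \<le> norm (transpose J *v v)"
  shows "s * norm (transpose J *v w) \<le> norm (J *v (transpose J *v w))"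
proof -
  let ?v = "transpose J *v w"
  have "s * (norm ?v)\<^sup>2 = s * (w \<bullet> (J *v ?v))"
    by (simp only: power2_norm_eq_inner inner_transpose_mult)
  also have "\<dots> \<le> s * norm w * norm (J *v ?v)"
    using norm_cauchy_schwarz[of w "J *v ?v"] s by (simp add: mult.assoc)
  also have "\<dots> \<le> norm ?v * norm (J *v ?v)"
    using sing[of w] by (simp add: mult_right_mono)
  finally have "(s * norm ?v) * norm ?v \<le> norm (J *v ?v) * norm ?v"
    by (simp add: power2_eq_square algebra_simps)
  then show ?thesis
    by (cases "?v = 0") auto
qed

lemma null_component_norm_le:
  fixes J :: "real^'n^'m" and H :: "real^'n^'n"
  assumes sys: "H *v (v + u) + transpose J *v y = - g" and Ju: "J *v u = 0"
    and curv: "zeta * (norm u)\<^sup>2 \<le> u \<bullet> (H *v u)" and zeta: "0 < zeta"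
    and Hb: "\<And>h. norm (H *v h) \<le> kap * norm h"
  shows "zeta * norm u \<le> norm g + kap * norm v"
proof -
  have "u \<bullet> (transpose J *v y) = 0"
    using inner_transpose_mult[of J y u] Ju by (simp add: inner_commute)
  then have "u \<bullet> (H *v u) = - (u \<bullet> g) - u \<bullet> (H *v v)"
    using arg_cong[OF sys, of "inner u"]
    by (simp add: matrix_vector_right_distrib inner_add_right algebra_simps)
  also have "\<dots> \<le> norm u * norm g + norm u * (kap * norm v)"
    using Cauchy_Schwarz_ineq2[of u g] Cauchy_Schwarz_ineq2[of u "H *v v"]
      mult_left_mono[OF Hb[of v] norm_ge_zero[of u]]
    by linarith
  finally have "(zeta * norm u) * norm u \<le> (norm g + kap * norm v) * norm u"
    using curv by (simp add: power2_eq_square algebra_simps)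
  moreover have "0 \<le> norm g + kap * norm v"
    using Hb[of v] norm_ge_zero[of "H *v v"] norm_ge_zero[of g] by linarith
  ultimately show ?thesis
    by (cases "u = 0") auto
qed

lemma neg_quadratic_form_le:
  fixes H :: "real^'n^'n"
  assumes curv: "zeta * (norm u)\<^sup>2 \<le> u \<bullet> (H *v u)" and zeta: "0 < zeta"
    and Hb: "\<And>h. norm (H *v h) \<le> kap * norm h"
  shows "- ((v + u) \<bullet> (H *v (v + u))) \<le> (kap\<^sup>2 / zeta + kap) * (norm v)\<^sup>2"
proof -
  have cs: "\<bar>a \<bullet> (H *v b)\<bar> \<le> kap * norm a * norm b" for a b
    using Cauchy_Schwarz_ineq2[of a "H *v b"] mult_left_mono[OF Hb[of b] norm_ge_zero[of a]]
    by (simp add: algebra_simps)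
  have "0 \<le> (zeta * norm u - kap * norm v)\<^sup>2"
    by simp
  then have "2 * kap * norm u * norm v - zeta * (norm u)\<^sup>2 \<le> kap\<^sup>2 / zeta * (norm v)\<^sup>2"
    using zeta by (simp add: field_simps power2_eq_square)
  moreover have "(v + u) \<bullet> (H *v (v + u))
      = u \<bullet> (H *v u) + u \<bullet> (H *v v) + v \<bullet> (H *v u) + v \<bullet> (H *v v)"
    by (simp add: matrix_vector_right_distrib inner_add_left inner_add_right)
  ultimately show ?thesis
    using cs[of u v] cs[of v u] cs[of v v] curv
    by (simp add: abs_le_iff power2_eq_square algebra_simps)
qed

lemma kkt_step_decomp:
  fixes J :: "real^'n^'m"
  assumes Jd: "J *v d = - cc"
    and s: "0 < s" and sing: "\<And>v. s * norm v \<le> norm (transpose J *v v)"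
  obtains v u where "d = v + u" "J *v u = 0" "norm v \<le> norm cc / s"
proof -
  obtain w u where d: "d = transpose J *v w + u" and Ju: "J *v u = 0"
    by (rule range_transpose_null_decomp)
  have "J *v (transpose J *v w) = - cc"
    using Jd Ju by (simp add: d matrix_vector_right_distrib)
  then have "s * norm (transpose J *v w) \<le> norm cc"
    using norm_range_transpose_le[OF s sing, of w] by simp
  then have "norm (transpose J *v w) \<le> norm cc / s"
    using s by (simp add: field_simps)
  then show ?thesis
    using that d Ju by blast
qed

lemma kkt_step_norm_le:
  fixes J :: "real^'n^'m" and H :: "real^'n^'n"
  assumes sys: "H *v d + transpose J *v y = - g" and Jd: "J *v d = - cc"
    and s: "0 < s" and sing: "\<And>v. s * norm v \<le> norm (transpose J *v v)"
    and Hb: "\<And>h. norm (H *v h) \<le> kap * norm h" and kap: "0 \<le> kap"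
    and curv: "\<And>u. J *v u = 0 \<Longrightarrow> zeta * (norm u)\<^sup>2 \<le> u \<bullet> (H *v u)" and zeta: "0 < zeta"
  shows "zeta * norm d \<le> norm g + (kap + zeta) * norm cc / s"
proof -
  obtain v u where d: "d = v + u" and Ju: "J *v u = 0" and v: "norm v \<le> norm cc / s"
    using kkt_step_decomp[OF Jd s sing] by blast
  have u: "zeta * norm u \<le> norm g + kap * norm v"
    using null_component_norm_le[OF _ Ju curv[OF Ju] zeta Hb] sys d by simp
  have "zeta * norm d \<le> zeta * norm v + zeta * norm u"
    using norm_triangle_ineq[of v u] zeta by (simp add: d distrib_left[symmetric])
  also have "\<dots> \<le> norm g + (kap + zeta) * norm v"
    using u by (simp add: algebra_simps)
  also have "\<dots> \<le> norm g + (kap + zeta) * (norm cc / s)"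
    using mult_left_mono[OF v, of "kap + zeta"] kap zeta by simp
  finally show ?thesis
    by simp
qed

lemma kkt_denominator_le:
  fixes J :: "real^'n^'m" and H :: "real^'n^'n"
  assumes sys: "H *v d + transpose J *v y = - g" and Jd: "J *v d = - cc"
    and s: "0 < s" and sing: "\<And>v. s * norm v \<le> norm (transpose J *v v)"
    and Hb: "\<And>h. norm (H *v h) \<le> kap * norm h" and kap: "0 \<le> kap"
    and curv: "\<And>u. J *v u = 0 \<Longrightarrow> zeta * (norm u)\<^sup>2 \<le> u \<bullet> (H *v u)" and zeta: "0 < zeta"
  shows "g \<bullet> d + max (d \<bullet> (H *v d)) 0 \<le> (norm y + (kap\<^sup>2 / zeta + kap) * norm cc / s\<^sup>2) * l1n cc"
proof -
  obtain v u where d: "d = v + u" and Ju: "J *v u = 0" and v: "norm v \<le> norm cc / s"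
    using kkt_step_decomp[OF Jd s sing] by blast
  have K2: "0 \<le> kap\<^sup>2 / zeta + kap"
    using kap zeta by simp
  have "(kap\<^sup>2 / zeta + kap) * (norm v)\<^sup>2 \<le> (kap\<^sup>2 / zeta + kap) * (norm cc / s)\<^sup>2"
    using v K2 by (simp add: power_mono mult_left_mono)
  then have neg_dHd: "- (d \<bullet> (H *v d)) \<le> (kap\<^sup>2 / zeta + kap) * (norm cc / s)\<^sup>2"
    using neg_quadratic_form_le[OF curv[OF Ju] zeta Hb, of v] unfolding d by linarith
  have "d \<bullet> (H *v d) = y \<bullet> cc - g \<bullet> d"
    using arg_cong[OF sys, of "inner d"] inner_transpose_mult[of J y d] Jd
    by (simp add: inner_add_right inner_commute)
  then have "g \<bullet> d + max (d \<bullet> (H *v d)) 0 = y \<bullet> cc + max (- (d \<bullet> (H *v d))) 0"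
    by (simp add: max_def)
  also have "\<dots> \<le> norm y * norm cc + (kap\<^sup>2 / zeta + kap) * (norm cc / s)\<^sup>2"
    using norm_cauchy_schwarz[of y cc] neg_dHd mult_nonneg_nonneg[OF K2 zero_le_power2[of "norm cc / s"]]
    by simp
  also have "\<dots> = (norm y + (kap\<^sup>2 / zeta + kap) * norm cc / s\<^sup>2) * norm cc"
    by (simp add: power2_eq_square field_simps)
  also have "\<dots> \<le> (norm y + (kap\<^sup>2 / zeta + kap) * norm cc / s\<^sup>2) * l1n cc"
    using norm_le_l1_cart[of cc] K2 s
    by (intro mult_left_mono) (simp_all add: l1n_def)
  finally show ?thesis .
qed

lemma kkt_multiplier_norm_le:
  fixes J :: "real^'n^'m" and H :: "real^'n^'n"
  assumes sys: "H *v d + transpose J *v y = - g"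
    and sing: "\<And>v. s * norm v \<le> norm (transpose J *v v)"
    and Hb: "\<And>h. norm (H *v h) \<le> kap * norm h"
  shows "s * norm y \<le> norm g + kap * norm d"
proof -
  have "transpose J *v y = - g - H *v d"
    using sys by (simp add: algebra_simps)
  then have "norm (transpose J *v y) \<le> norm g + norm (H *v d)"
    by (metis norm_minus_cancel norm_triangle_ineq4)
  then show ?thesis
    using sing[of y] Hb[of d] by linarith
qed

lemma kkt_denominator_uniformly_le_l1:
  fixes J :: "nat \<Rightarrow> real^'n^'m" and H :: "nat \<Rightarrow> real^'n^'n"
  assumes sys: "\<And>k. H k *v d k + transpose (J k) *v y k = - g k" and Jd: "\<And>k. J k *v d k = - cc k"
    and s: "0 < s" and sing: "\<And>k v. s * norm v \<le> norm (transpose (J k) *v v)"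
    and Hb: "\<And>k h. norm (H k *v h) \<le> kap * norm h" and kap: "0 \<le> kap"
    and curv: "\<And>k u. J k *v u = 0 \<Longrightarrow> zeta * (norm u)\<^sup>2 \<le> u \<bullet> (H k *v u)" and zeta: "0 < zeta"
    and G: "\<And>k. norm (g k) \<le> G" and C: "\<And>k. norm (cc k) \<le> C"
  obtains K where "0 < K" "\<And>k. g k \<bullet> d k + max (d k \<bullet> (H k *v d k)) 0 \<le> K * l1n (cc k)"
proof -
  define Q where "Q = kap\<^sup>2 / zeta + kap"
  define D where "D = (G + (kap + zeta) * C / s) / zeta"
  define Y where "Y = (G + kap * D) / s"
  define K where "K = Y + Q * C / s\<^sup>2 + 1"
  have Q: "0 \<le> Q"
    using kap zeta by (simp add: Q_def)
  have D: "norm (d k) \<le> D" for k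
  proof -
    have "(kap + zeta) * norm (cc k) / s \<le> (kap + zeta) * C / s"
      using kap zeta s by (intro divide_right_mono mult_left_mono[OF C]) simp_all
    then have "zeta * norm (d k) \<le> G + (kap + zeta) * C / s"
      using kkt_step_norm_le[OF sys Jd s sing Hb kap curv zeta, of k] G[of k] by linarith
    then show ?thesis
      using zeta by (simp add: D_def field_simps)
  qed
  have Y: "norm (y k) \<le> Y" for k
  proof -
    have "s * norm (y k) \<le> G + kap * D"
      using kkt_multiplier_norm_le[OF sys sing Hb, of k] G[of k] mult_left_mono[OF D[of k] kap] by linarith
    then show ?thesis
      using s by (simp add: Y_def field_simps)
  qed
  have cc_term: "Q * norm (cc k) / s\<^sup>2 \<le> Q * C / s\<^sup>2" for k
    using Q by (intro divide_right_mono mult_left_mono[OF C]) simp_all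
  show ?thesis
  proof
    have "0 \<le> Q * norm (cc 0) / s\<^sup>2"
      using Q by simp
    then show "0 < K"
      unfolding K_def using cc_term[of 0] Y[of 0] norm_ge_zero[of "y 0"] by linarith
    fix k
    have "(norm (y k) + Q * norm (cc k) / s\<^sup>2) * l1n (cc k) \<le> K * l1n (cc k)"
      unfolding K_def using Y[of k] cc_term[of k] l1n_nonneg by (intro mult_right_mono) simp_all
    then show "g k \<bullet> d k + max (d k \<bullet> (H k *v d k)) 0 \<le> K * l1n (cc k)"
      using kkt_denominator_le[OF sys Jd s sing Hb kap curv zeta, of k] unfolding Q_def by linarith
  qed
qed

lemma tau_update_unchanged_or_reduced:
  assumes "eps \<le> 1"
  shows "tau_update eps sig tp g H d cn = tp \<or> tau_update eps sig tp g H d cn \<le> (1 - eps) * tp"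
proof -
  define tt where "tt = (1 - sig) * cn / (g \<bullet> d + max (d \<bullet> (H *v d)) 0)"
  have "(1 - eps) * tt \<le> (1 - eps) * tp" if "tt < tp"
    using that assms by (simp add: mult_left_mono)
  then show ?thesis
    unfolding tau_update_def Let_def tt_def[symmetric] by auto
qed

lemma tau_update_ge_min:
  assumes q: "g \<bullet> d + max (d \<bullet> (H *v d)) 0 \<le> K * cn" and K: "0 < K"
    and eps: "eps \<le> 1" and sig: "sig \<le> 1"
  shows "min tp ((1 - eps) * (1 - sig) / K) \<le> tau_update eps sig tp g H d cn"
proof -
  define q where "q = g \<bullet> d + max (d \<bullet> (H *v d)) 0"
  define tt where "tt = (1 - sig) * cn / q"
  have upd: "tau_update eps sig tp g H d cn = (if q \<le> 0 \<or> tp \<le> tt then tp else (1 - eps) * tt)"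
    unfolding tau_update_def q_def tt_def Let_def by simp
  show ?thesis
  proof (cases "q \<le> 0 \<or> tp \<le> tt")
    case False
    then have "0 < q"
      by simp
    have "(1 - sig) * q \<le> (1 - sig) * (K * cn)"
      using q sig by (simp add: q_def mult_left_mono)
    then have "(1 - sig) / K \<le> tt"
      using \<open>0 < q\<close> K by (simp add: tt_def field_simps)
    then have "(1 - eps) * (1 - sig) / K \<le> (1 - eps) * tt"
      using eps by (metis diff_ge_0_iff_ge mult_left_mono times_divide_eq_right)
    then show ?thesis
      using upd False by simp
  qed (use upd in auto)
qed

lemma eventually_const_of_geometric_drops:
  fixes t :: "nat \<Rightarrow> real"
  assumes drop: "\<And>k. t (Suc k) = t k \<or> t (Suc k) \<le> r * t k"
    and r: "0 \<le> r" "r < 1" and lb: "\<And>k. m \<le> t k" and m: "0 < m"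
  shows "\<exists>K. \<forall>k\<ge>K. t k = t K"
proof -
  have "t (Suc k) \<le> t k" for k
  proof -
    have "r * t k \<le> t k"
      using mult_right_mono[of r 1 "t k"] lb[of k] m r by simp
    then show ?thesis
      using drop[of k] by linarith
  qed
  then have "decseq t"
    by (simp add: decseq_SucI)
  define L where "L = Inf (range t)"
  have bdd: "bdd_below (range t)"
    by (rule bdd_belowI2) (rule lb)
  have "m \<le> L"
    unfolding L_def using lb by (auto intro: cInf_greatest)
  have L: "L \<le> t k" for k
    unfolding L_def using bdd by (auto intro: cInf_lower)
  obtain K where K: "r * t K < L"
  proof (cases "r = 0")
    case True
    then show ?thesis
      using that \<open>m \<le> L\<close> m by auto
  next
    case False
    then have "L < L / r"
      using r \<open>m \<le> L\<close> m by (simp add: field_simps)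
    then obtain K where "t K < L / r"
      unfolding L_def using bdd by (auto simp: cInf_less_iff)
    then show ?thesis
      using that False r by (simp add: field_simps)
  qed
  have const_step: "t (Suc k) = t k" if "K \<le> k" for k
  proof (rule ccontr)
    assume "t (Suc k) \<noteq> t k"
    then have "t (Suc k) \<le> r * t K"
      using drop[of k] mult_left_mono[OF decseqD[OF \<open>decseq t\<close> that] r(1)] by auto
    then show False
      using K L[of "Suc k"] by linarith
  qed
  have "t k = t K" if "K \<le> k" for k
    using that by (induction k rule: dec_induct) (simp_all add: const_step)
  then show ?thesis
    by blast
qed

lemma tau_update_sequence_eventually_const:
  fixes H :: "nat \<Rightarrow> real^'n^'n"
  assumes q: "\<And>k. g k \<bullet> d k + max (d k \<bullet> (H k *v d k)) 0 \<le> K * cn k" and K: "0 < K"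
    and tau_0: "tau 0 = tau_update eps sig tau0 (g 0) (H 0) (d 0) (cn 0)"
    and tau_Suc: "\<And>k. tau (Suc k) = tau_update eps sig (tau k) (g (Suc k)) (H (Suc k)) (d (Suc k)) (cn (Suc k))"
    and eps: "0 < eps" "eps < 1" and sig: "sig < 1" and tau0: "0 < tau0"
  shows "\<exists>k0 tmin. 0 < tmin \<and> (\<forall>k\<ge>k0. tau k = tmin)"
proof -
  define m where "m = min tau0 ((1 - eps) * (1 - sig) / K)"
  have m: "0 < m"
    using eps sig tau0 K by (simp add: m_def)
  have lb: "m \<le> tau k" for k
  proof (induction k)
    case 0
    show ?case
      using tau_update_ge_min[OF q[of 0] K, of eps sig tau0] eps sig by (simp add: tau_0 m_def)
  next
    case (Suc k)
    show ?case
      using tau_update_ge_min[OF q[of "Suc k"] K, of eps sig "tau k"] Suc eps sig by (simp add: tau_Suc m_def)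
  qed
  have drop: "tau (Suc k) = tau k \<or> tau (Suc k) \<le> (1 - eps) * tau k" for k
    unfolding tau_Suc by (rule tau_update_unchanged_or_reduced) (use eps in simp)
  have "\<exists>k0. \<forall>k\<ge>k0. tau k = tau k0"
    by (rule eventually_const_of_geometric_drops[where t = tau and r = "1 - eps", OF drop _ _ lb m])
      (use eps in simp_all)
  then show ?thesis
    using lb m by (meson less_le_trans)
qed

theorem lemma2p16:
  fixes f :: "real^'n \<Rightarrow> real" and gradf :: "real^'n \<Rightarrow> real^'n"
    and c :: "real^'n \<Rightarrow> real^'m" and Jc :: "real^'n \<Rightarrow> real^'n^'m"
    and X :: "(real^'n) set"
    and H :: "nat \<Rightarrow> real^'n^'n"
    and x d :: "nat \<Rightarrow> real^'n" and y :: "nat \<Rightarrow> real^'m"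
    and tau alpha :: "nat \<Rightarrow> real"
    and eps sig eta tau0 :: real
    and rho Lm1 :: real and Gm1 :: "'m \<Rightarrow> real"
    and LL :: "nat \<Rightarrow> nat \<Rightarrow> real" and GG :: "nat \<Rightarrow> nat \<Rightarrow> 'm \<Rightarrow> real" and jacc :: "nat \<Rightarrow> nat"
    and nu abar :: real
    and kappaH zeta :: real
  assumes params: "0 < eps" "eps < 1" "0 < sig" "sig < 1" "0 < eta" "eta < 1" "0 < tau0"
    and X_open: "open X" and X_convex: "convex X"
    and iter_in_X: "\<forall>k. x k \<in> X"
    and f_deriv: "\<forall>z\<in>X. (f has_derivative (\<lambda>h. gradf z \<bullet> h)) (at z)"
    and gradf_cont: "continuous_on X gradf"
    and f_bdd_below: "\<exists>B. \<forall>z\<in>X. B \<le> f z"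
    and gradf_bdd: "\<exists>B. \<forall>z\<in>X. norm (gradf z) \<le> B"
    and gradf_lip: "\<exists>Lf. \<forall>z\<in>X. \<forall>w\<in>X. norm (gradf z - gradf w) \<le> Lf * dist z w"
    and c_deriv: "\<forall>z\<in>X. (c has_derivative (\<lambda>h. Jc z *v h)) (at z)"
    and c_bdd: "\<exists>B. \<forall>z\<in>X. norm (c z) \<le> B"
    and Jc_bdd: "\<exists>B. \<forall>z\<in>X. onorm (\<lambda>h. Jc z *v h) \<le> B"
    and Jc_lip: "\<forall>i. \<exists>gi. \<forall>z\<in>X. \<forall>w\<in>X. norm (Jc z $ i - Jc w $ i) \<le> gi * dist z w"
    and Jc_sing: "\<exists>s>0. \<forall>z\<in>X. \<forall>v::real^'m. s * norm v \<le> norm (transpose (Jc z) *v v)"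
    and H_sym: "\<forall>k. transpose (H k) = H k"
    and H_bdd: "\<forall>k. onorm (\<lambda>h. H k *v h) \<le> kappaH"
    and zeta_pos: "0 < zeta"
    and H_curv: "\<forall>k. \<forall>u. Jc (x k) *v u = 0 \<longrightarrow> zeta * (norm u)\<^sup>2 \<le> u \<bullet> (H k *v u)"
    and iter: "common_iter f gradf c Jc H eps sig tau0 x d y tau alpha"
    and no_term: "\<forall>k. \<not> (gradf (x k) + transpose (Jc (x k)) *v y k = 0 \<and> c (x k) = 0)"
    and steps: "(1 < rho \<and> 0 < Lm1 \<and> (\<forall>i. 0 < Gm1 i)
                  \<and> alg1_steps f gradf c Jc H eta rho Lm1 Gm1 X x d tau alpha LL GG jacc)
              \<or> (0 < nu \<and> nu < 1 \<and> 0 < abar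
                  \<and> alg2_steps f gradf c H eta nu abar X x d tau alpha)"
  shows "\<exists>k_tau tau_min. tau_min > 0 \<and> (\<forall>k\<ge>k_tau. tau k = tau_min)"
proof -
  obtain s where s: "0 < s" and sing: "\<forall>z\<in>X. \<forall>v::real^'m. s * norm v \<le> norm (transpose (Jc z) *v v)"
    using Jc_sing by blast
  obtain G where G: "\<forall>z\<in>X. norm (gradf z) \<le> G"
    using gradf_bdd by blast
  obtain C where C: "\<forall>z\<in>X. norm (c z) \<le> C"
    using c_bdd by blast
  have kap: "0 \<le> kappaH"
    using H_bdd onorm_pos_le[OF matrix_vector_mul_bounded_linear[of "H 0"]] by (meson order_trans)
  have Hb: "norm (H k *v h) \<le> kappaH * norm h" for k h
    using onorm[OF matrix_vector_mul_bounded_linear[of "H k"], of h]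
      mult_right_mono[OF H_bdd[rule_format, of k] norm_ge_zero[of h]] by linarith
  note iter_eqs = iter[unfolded common_iter_def, rule_format]
  have kkt: "H k *v d k + transpose (Jc (x k)) *v y k = - gradf (x k)" "Jc (x k) *v d k = - c (x k)" for k
    using iter_eqs[of k] by simp_all
  have sing_k: "s * norm v \<le> norm (transpose (Jc (x k)) *v v)" for k v
    using sing iter_in_X by blast
  have curv_k: "Jc (x k) *v u = 0 \<Longrightarrow> zeta * (norm u)\<^sup>2 \<le> u \<bullet> (H k *v u)" for k u
    using H_curv by blast
  have G_k: "norm (gradf (x k)) \<le> G" and C_k: "norm (c (x k)) \<le> C" for k
    using G C iter_in_X by blast+
  obtain K where K: "0 < K" "\<And>k. gradf (x k) \<bullet> d k + max (d k \<bullet> (H k *v d k)) 0 \<le> K * l1n (c (x k))"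
    by (rule kkt_denominator_uniformly_le_l1[where J = "\<lambda>k. Jc (x k)" and g = "\<lambda>k. gradf (x k)"
          and cc = "\<lambda>k. c (x k)" and s = s and kap = kappaH and zeta = zeta and G = G and C = C])
      (use kkt s sing_k Hb kap curv_k zeta_pos G_k C_k in auto)
  have tau_0: "tau 0 = tau_update eps sig tau0 (gradf (x 0)) (H 0) (d 0) (l1n (c (x 0)))"
    and tau_Suc: "tau (Suc k) = tau_update eps sig (tau k) (gradf (x (Suc k))) (H (Suc k)) (d (Suc k))
      (l1n (c (x (Suc k))))" for k
    using iter_eqs[of 0] iter_eqs[of "Suc k"] by simp_all
  show ?thesis
    by (rule tau_update_sequence_eventually_const[OF K(2) K(1) tau_0 tau_Suc params(1,2,4,7)])
qed

end
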